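(* Let $c\ge2$, $d\ge1$, and let $Y\subseteq\Sigma^c$ be a zero-set with $|Y|=4$. Then $Y$ survives $d$ rounds of tornado tabulation with probability $\left(\left(3-2/|\Sigma|\right)/|\Sigma|\right)^d$.
   Context: Let $\Sigma=\{0,\dots,2^k-1\}$, identified with $k$-bit strings, $\oplus$ bitwise xor. A simple tabulation hash function $g:\Sigma^b\to\Sigma$ is $g(x_1\cdots x_b)=T_1[x_1]\oplus\cdots\oplus T_b[x_b]$ with independent fully random tables $T_i:\Sigma\to\Sigma$. Let $\tilde h_1,\dots,\tilde h_d$ be mutually independent simple tabulation functions with $\tilde h_i:\Sigma^{c+i-1}\to\Sigma$. The simple derived key of $x=x_1\cdots x_c$ is $\tilde h'(x)=\tilde x_1\cdots\tilde x_{c+d}$ with $\tilde x_i=x_i$ for $i\le c$ and $\tilde x_i=\tilde h_{i-c}(\tilde x_1\cdots\tilde x_{i-1})$ for $c<i\le c+d$. A set $Y$ of keys in $\Sigma^b$ is a zero-set if for every position $i$ and every character $a$, the number of $y\in Y$ with $y_i=a$ is even. A zero-set $Y\subseteq\Sigma^c$ survives $d$ rounds of tornado tabulation if $\tilde h'(Y)\subseteq\Sigma^{c+d}$ is a zero-set. *)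

theory Defs
  imports "HOL-Probability.Probability_Mass_Function"
begin

text \<open>The alphabet Sigma = {0,...,2^k-1}; characters are naturals, xor is bitwise xor on nat.
Keys in Sigma^b are lists of length b with entries in Sigma.\<close>

definition alphabet :: "nat \<Rightarrow> nat set" where
  "alphabet k = {..<2^k}"

definition keys :: "nat \<Rightarrow> nat \<Rightarrow> nat list set" where
  "keys k b = {x. length x = b \<and> set x \<subseteq> alphabet k}"

definition simple_tab :: "(nat \<Rightarrow> nat \<Rightarrow> nat) \<Rightarrow> nat list \<Rightarrow> nat" where
  "simple_tab T x = fold (\<lambda>i acc. xor acc (T i (x ! i))) [0..<length x] 0"

text \<open>Tab j holds the tables of the (j+1)-th round function, defined on keys of length c+j.\<close>
fun derived_aux :: "(nat \<Rightarrow> nat \<Rightarrow> nat \<Rightarrow> nat) \<Rightarrow> nat \<Rightarrow> nat list \<Rightarrow> nat list" where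
  "derived_aux Tab 0 x = x"
| "derived_aux Tab (Suc j) x = (let y = derived_aux Tab j x in y @ [simple_tab (Tab j) y])"

definition derived_key :: "(nat \<Rightarrow> nat \<Rightarrow> nat \<Rightarrow> nat) \<Rightarrow> nat \<Rightarrow> nat list \<Rightarrow> nat list" where
  "derived_key Tab d x = derived_aux Tab d x"

text \<open>Uniform choice = independent fully random tables.\<close>
definition tables :: "nat \<Rightarrow> nat \<Rightarrow> nat \<Rightarrow> (nat \<Rightarrow> nat \<Rightarrow> nat \<Rightarrow> nat) set" where
  "tables k c d = {Tab. \<forall>j i a. Tab j i a \<in> alphabet k \<and>
      (\<not> (j < d \<and> i < c + j \<and> a \<in> alphabet k) \<longrightarrow> Tab j i a = 0)}"

definition zero_set :: "nat \<Rightarrow> nat list set \<Rightarrow> bool" where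
  "zero_set b Y = (\<forall>i<b. \<forall>a. even (card {y \<in> Y. y ! i = a}))"

end

theory Submission
  imports Defs
begin

(* After each round the derived keys of Y are still four distinct keys, and the new set
   is a zero-set iff the old one is and the four new characters pair up. So, as the rounds
   use independent tables, it suffices to show that a fresh simple tabulation h pairs up the
   values on four distinct keys x1,..,x4 whose characters pair up at every position with
   probability (3n - 2)/n^2, where n = |Sigma|.
   Pairing at every position gives h x4 = h x1 XOR h x2 XOR h x3, so the four values pair up iff
   (h x1 XOR h x2, h x1 XOR h x3) lies on one of the lines s = 0, t = 0, s = t of Sigma^2,
   which contain 3n - 2 points. That pair is uniformly distributed: xoring v into the table
   entry read by x1 at position p shifts it by v times the pattern (x2_p ~= x1_p, x3_p ~= x1_p),
   and since the keys are distinct and pair up, two positions have linearly independent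
   patterns over GF(2). *)

unbundle bit_operations_syntax

section \<open>Xor sums and simple tabulation\<close>

lemma xor_left_self [simp]: "(a::nat) XOR (a XOR b) = b"
  by (simp add: xor.assoc [symmetric])

lemma xor_right_self: "((a::nat) XOR b) XOR b = a"
  by (simp add: xor.assoc)

lemma xor_left_cancel_iff [simp]: "(c::nat) XOR a = c XOR b \<longleftrightarrow> a = b"
  by (metis xor_left_self)

lemma xor_eq_0_iff [simp]: "(a::nat) XOR b = 0 \<longleftrightarrow> a = b"
  by (metis xor_left_cancel_iff xor.right_neutral xor_self_eq)

lemma xor4_eq_0_iff: "(a::nat) XOR b XOR c XOR d = 0 \<longleftrightarrow> d = a XOR b XOR c"
  by (metis xor_eq_0_iff xor_left_self xor.left_commute)

lemma xor_less_two_power: "(a::nat) < 2 ^ k \<Longrightarrow> b < 2 ^ k \<Longrightarrow> a XOR b < 2 ^ k"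
  by (metis take_bit_nat_eq_self_iff take_bit_xor)

lemma xor_xor_shift:
  "((a::nat) XOR v) XOR (b XOR (if e then v else 0)) = (a XOR b) XOR (if e then 0 else v)"
  by (simp add: ac_simps)

definition xor_upto :: "(nat \<Rightarrow> nat) \<Rightarrow> nat \<Rightarrow> nat" where
  "xor_upto f m = fold (\<lambda>i acc. acc XOR f i) [0..<m] 0"

lemma xor_upto_0 [simp]: "xor_upto f 0 = 0"
  by (simp add: xor_upto_def)

lemma xor_upto_Suc [simp]: "xor_upto f (Suc m) = xor_upto f m XOR f m"
  by (simp add: xor_upto_def)

lemma xor_upto_xor: "xor_upto f m XOR xor_upto g m = xor_upto (\<lambda>i. f i XOR g i) m"
  by (induction m) (simp_all add: ac_simps)

lemma xor_upto_eq_0: "(\<And>i. i < m \<Longrightarrow> f i = 0) \<Longrightarrow> xor_upto f m = 0"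
  by (induction m) auto

lemma xor_upto_less_two_power: "(\<And>i. i < m \<Longrightarrow> f i < 2 ^ k) \<Longrightarrow> xor_upto f m < 2 ^ k"
  by (induction m) (auto intro: xor_less_two_power)

lemma xor_upto_fun_upd:
  "xor_upto (f(p := y)) m = xor_upto f m XOR (if p < m then f p XOR y else 0)"
  by (induction m) (auto simp: ac_simps less_Suc_eq)

lemma simple_tab_eq_xor_upto: "simple_tab T x = xor_upto (\<lambda>i. T i (x ! i)) (length x)"
  by (simp add: simple_tab_def xor_upto_def)

lemma simple_tab_less_two_power: "(\<And>i a. T i a < 2 ^ k) \<Longrightarrow> simple_tab T x < 2 ^ k"
  unfolding simple_tab_eq_xor_upto by (rule xor_upto_less_two_power)

definition xor_entry :: "nat \<Rightarrow> nat \<Rightarrow> nat \<Rightarrow> (nat \<Rightarrow> nat \<Rightarrow> nat) \<Rightarrow> nat \<Rightarrow> nat \<Rightarrow> nat" where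
  "xor_entry p a v T = T(p := (T p)(a := T p a XOR v))"

lemma xor_entry_xor_entry [simp]: "xor_entry p a v (xor_entry p a v T) = T"
  by (simp add: xor_entry_def fun_eq_iff xor.assoc)

lemma simple_tab_xor_entry:
  assumes "p < length x"
  shows "simple_tab (xor_entry p a v T) x = simple_tab T x XOR (if x ! p = a then v else 0)"
proof -
  let ?f = "\<lambda>i. T i (x ! i)"
  have "(\<lambda>i. xor_entry p a v T i (x ! i)) = ?f(p := ?f p XOR (if x ! p = a then v else 0))"
    by (auto simp: xor_entry_def fun_eq_iff)
  then show ?thesis
    using assms by (simp add: simple_tab_eq_xor_upto xor_upto_fun_upd)
qed

section \<open>Zero-sets of four keys\<close>

definition paired :: "'a \<Rightarrow> 'a \<Rightarrow> 'a \<Rightarrow> 'a \<Rightarrow> bool" where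
  "paired a b c d \<longleftrightarrow> (a = b \<and> c = d) \<or> (a = c \<and> b = d) \<or> (a = d \<and> b = c)"

lemma paired_image: "paired a b c d \<Longrightarrow> paired (f a) (f b) (f c) (f d)"
  by (auto simp: paired_def)

lemma paired_exactly_one: "paired a b c d \<Longrightarrow> d \<noteq> a \<Longrightarrow> (b = a) \<longleftrightarrow> (c \<noteq> a)"
  by (auto simp: paired_def)

lemma paired_xor_eq_0: "paired a b c d \<Longrightarrow> (a::nat) XOR b XOR c XOR d = 0"
  by (auto simp: paired_def ac_simps)

lemma paired_xor_iff: "paired a b c ((a::nat) XOR b XOR c) \<longleftrightarrow> a = b \<or> a = c \<or> b = c"
  by (auto simp: paired_def ac_simps)

definition even_fibres :: "('a \<Rightarrow> 'b) \<Rightarrow> 'a set \<Rightarrow> bool" where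
  "even_fibres f Y \<longleftrightarrow> (\<forall>z. even (card {y \<in> Y. f y = z}))"

lemma zero_set_iff_even_fibres: "zero_set m Y \<longleftrightarrow> (\<forall>i<m. even_fibres (\<lambda>y. y ! i) Y)"
  by (simp add: zero_set_def even_fibres_def)

lemma even_fibres_cong:
  assumes "\<And>y. y \<in> Y \<Longrightarrow> f y = g y"
  shows "even_fibres f Y \<longleftrightarrow> even_fibres g Y"
proof -
  have "{y \<in> Y. f y = z} = {y \<in> Y. g y = z}" for z
    using assms by auto
  then show ?thesis by (simp add: even_fibres_def)
qed

lemma even_fibres_image:
  assumes "inj_on h Y"
  shows "even_fibres f (h ` Y) \<longleftrightarrow> even_fibres (f \<circ> h) Y"
proof -
  have "card {z \<in> h ` Y. f z = a} = card {y \<in> Y. f (h y) = a}" for a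
  proof -
    have "{z \<in> h ` Y. f z = a} = h ` {y \<in> Y. f (h y) = a}" by auto
    then show ?thesis
      using assms by (simp add: card_image inj_on_subset)
  qed
  then show ?thesis by (simp add: even_fibres_def)
qed

lemma card_eq_4_obtain:
  assumes "card Y = 4"
  obtains x1 x2 x3 x4 where "Y = {x1, x2, x3, x4}" and "distinct [x1, x2, x3, x4]"
proof -
  obtain x1 Y' where "Y = insert x1 Y'" "x1 \<notin> Y'" "card Y' = 3"
    using assms card_Suc_eq [of Y 3] by auto
  moreover obtain x2 x3 x4 where "Y' = {x2, x3, x4}" "x2 \<noteq> x3" "x3 \<noteq> x4" "x2 \<noteq> x4"
    using \<open>card Y' = 3\<close> card_3_iff by metis
  ultimately show ?thesis
    using that by auto
qed

lemma even_fibres_four_iff: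
  assumes "distinct [x1, x2, x3, x4]"
  shows "even_fibres f {x1, x2, x3, x4} \<longleftrightarrow> paired (f x1) (f x2) (f x3) (f x4)"
proof -
  have card: "card {y \<in> {x1, x2, x3, x4}. f y = z} = length (filter (\<lambda>y. f y = z) [x1, x2, x3, x4])"
    for z
    using distinct_card [OF distinct_filter [OF assms], of "\<lambda>y. f y = z"]
    by (simp only: set_filter list.set)
  show ?thesis
    unfolding even_fibres_def card paired_def
  proof
    assume "\<forall>z. even (length (filter (\<lambda>y. f y = z) [x1, x2, x3, x4]))"
    from spec [OF this, of "f x1"] spec [OF this, of "f x2"] spec [OF this, of "f x3"]
    show "f x1 = f x2 \<and> f x3 = f x4 \<or> f x1 = f x3 \<and> f x2 = f x4 \<or> f x1 = f x4 \<and> f x2 = f x3"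
      by (auto split: if_splits)
  qed auto
qed

lemma zero_set_Suc_append:
  assumes "\<And>y. y \<in> Y \<Longrightarrow> length y = m"
  shows "zero_set (Suc m) ((\<lambda>y. y @ [f y]) ` Y) \<longleftrightarrow> zero_set m Y \<and> even_fibres f Y"
proof -
  have "inj_on (\<lambda>y. y @ [f y]) Y" by (auto simp: inj_on_def)
  then have "zero_set (Suc m) ((\<lambda>y. y @ [f y]) ` Y) \<longleftrightarrow>
      (\<forall>i<Suc m. even_fibres (\<lambda>y. (y @ [f y]) ! i) Y)"
    by (simp add: zero_set_iff_even_fibres even_fibres_image comp_def)
  also have "\<dots> \<longleftrightarrow> (\<forall>i<m. even_fibres (\<lambda>y. y ! i) Y) \<and> even_fibres f Y"
    using assms by (auto simp: less_Suc_eq nth_append cong: even_fibres_cong)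
  finally show ?thesis by (simp add: zero_set_iff_even_fibres)
qed

section \<open>One round of simple tabulation\<close>

definition round_tables :: "nat \<Rightarrow> nat \<Rightarrow> (nat \<Rightarrow> nat \<Rightarrow> nat) set" where
  "round_tables k m =
     {T. \<forall>i a. T i a \<in> alphabet k \<and> (\<not> (i < m \<and> a \<in> alphabet k) \<longrightarrow> T i a = 0)}"

lemma finite_round_tables: "finite (round_tables k m)"
proof -
  let ?curry = "\<lambda>g i a. if i < m \<and> a < 2 ^ k then g (i, a) else (0::nat)"
  have "round_tables k m \<subseteq> ?curry ` (({..<m} \<times> {..<2 ^ k}) \<rightarrow>\<^sub>E {..<2 ^ k})"
  proof
    fix T assume T: "T \<in> round_tables k m"
    let ?g = "\<lambda>(i, a) \<in> {..<m} \<times> {..<2 ^ k}. T i a"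
    have "T = ?curry ?g" and "?g \<in> ({..<m} \<times> {..<2 ^ k}) \<rightarrow>\<^sub>E {..<2 ^ k}"
      using T by (auto simp: round_tables_def alphabet_def fun_eq_iff)
    then show "T \<in> ?curry ` (({..<m} \<times> {..<2 ^ k}) \<rightarrow>\<^sub>E {..<2 ^ k})" by blast
  qed
  then show ?thesis by (rule finite_subset) (simp add: finite_PiE)
qed

lemma xor_entry_in_round_tables:
  "T \<in> round_tables k m \<Longrightarrow> p < m \<Longrightarrow> a < 2 ^ k \<Longrightarrow> v < 2 ^ k \<Longrightarrow>
    xor_entry p a v T \<in> round_tables k m"
  by (auto simp: round_tables_def xor_entry_def alphabet_def intro: xor_less_two_power)

lemma card_preimage_eq_mult:
  assumes "finite A" and "finite C" and "\<And>z. z \<in> C \<Longrightarrow> card {x \<in> A. f x = z} = N"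
  shows "card {x \<in> A. f x \<in> C} = card C * N"
proof -
  have "{x \<in> A. f x \<in> C} = (\<Union>z\<in>C. {x \<in> A. f x = z})" by auto
  also have "card \<dots> = (\<Sum>z\<in>C. card {x \<in> A. f x = z})"
    using assms(1,2) by (intro card_UN_disjoint) auto
  finally show ?thesis using assms(3) by simp
qed

lemma card_axes_or_diagonal:
  assumes "0 < n"
  shows "card {(s, t). s < n \<and> t < n \<and> (s = 0 \<or> t = 0 \<or> s = (t::nat))} = 3 * n - 2"
proof -
  have "{(s, t). s < n \<and> t < n \<and> (s = 0 \<or> t = 0 \<or> s = t)}
      = {0} \<times> {..<n} \<union> {1..<n} \<times> {0} \<union> (\<lambda>s. (s, s)) ` {1..<n}"
    using assms by auto
  also have "card \<dots> = n + (n - 1) + (n - 1)"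
    by (subst card_Un_disjoint, auto)+ (auto simp: card_image inj_on_def)
  finally show ?thesis using assms by simp
qed

lemma xor_span_two_patterns:
  fixes s t :: nat
  assumes "(a, b) \<noteq> (a', b')" and "(a, b) \<noteq> (False, False)" and "(a', b') \<noteq> (False, False)"
  shows "\<exists>v \<in> {s, t, s XOR t}. \<exists>w \<in> {s, t, s XOR t}.
    s = (if a then v else 0) XOR (if a' then w else 0) \<and>
    t = (if b then v else 0) XOR (if b' then w else 0)"
proof (cases a; cases b; cases a'; cases b')
qed (use assms in \<open>simp_all add: ac_simps\<close>)

locale four_paired_keys =
  fixes k m :: nat and x1 x2 x3 x4 :: "nat list"
  assumes in_keys: "{x1, x2, x3, x4} \<subseteq> keys k m"
    and distinct_keys: "distinct [x1, x2, x3, x4]"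
    and paired_chars: "\<And>i. i < m \<Longrightarrow> paired (x1 ! i) (x2 ! i) (x3 ! i) (x4 ! i)"
begin

lemma length_keys: "length x1 = m" "length x2 = m" "length x3 = m" "length x4 = m"
  using in_keys by (auto simp: keys_def)

lemma simple_tab_x4: "simple_tab T x4 = simple_tab T x1 XOR simple_tab T x2 XOR simple_tab T x3"
proof -
  have "simple_tab T x1 XOR simple_tab T x2 XOR simple_tab T x3 XOR simple_tab T x4 = 0"
    unfolding simple_tab_eq_xor_upto length_keys xor_upto_xor
    by (rule xor_upto_eq_0) (metis paired_xor_eq_0 paired_image paired_chars)
  then show ?thesis by (simp only: xor4_eq_0_iff)
qed

definition hash_diffs :: "(nat \<Rightarrow> nat \<Rightarrow> nat) \<Rightarrow> nat \<times> nat" where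
  "hash_diffs T = (simple_tab T x1 XOR simple_tab T x2, simple_tab T x1 XOR simple_tab T x3)"

lemma paired_simple_tab_iff:
  "paired (simple_tab T x1) (simple_tab T x2) (simple_tab T x3) (simple_tab T x4) \<longleftrightarrow>
    hash_diffs T \<in> {(s, t). s = 0 \<or> t = 0 \<or> s = t}"
  by (auto simp: simple_tab_x4 paired_xor_iff hash_diffs_def)

lemma hash_diffs_less:
  "T \<in> round_tables k m \<Longrightarrow> hash_diffs T \<in> {..<2 ^ k} \<times> {..<2 ^ k}"
  by (auto simp: hash_diffs_def round_tables_def alphabet_def
      intro!: xor_less_two_power simple_tab_less_two_power)

definition fibre :: "nat \<Rightarrow> nat \<Rightarrow> (nat \<Rightarrow> nat \<Rightarrow> nat) set" where
  "fibre s t = {T \<in> round_tables k m. hash_diffs T = (s, t)}"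

definition diff_pattern :: "nat \<Rightarrow> bool \<times> bool" where
  "diff_pattern p = (x2 ! p \<noteq> x1 ! p, x3 ! p \<noteq> x1 ! p)"

lemma card_fibre_shift:
  assumes "p < m" and "v < 2 ^ k" and "diff_pattern p = (a, b)"
  shows "card (fibre s t) = card (fibre (s XOR (if a then v else 0)) (t XOR (if b then v else 0)))"
proof -
  let ?g = "xor_entry p (x1 ! p) v"
  let ?shift = "\<lambda>(s, t). (s XOR (if a then v else 0), t XOR (if b then v else 0))"
  have "x1 ! p \<in> set x1"
    using assms(1) length_keys(1) by simp
  then have "x1 ! p < 2 ^ k"
    using in_keys by (auto simp: keys_def alphabet_def)
  then have closed: "?g T \<in> round_tables k m" if "T \<in> round_tables k m" for T
    using xor_entry_in_round_tables that assms(1,2) by blast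
  have ab: "a \<longleftrightarrow> x2 ! p \<noteq> x1 ! p" "b \<longleftrightarrow> x3 ! p \<noteq> x1 ! p"
    using assms(3) by (auto simp: diff_pattern_def)
  have shift: "hash_diffs (?g T) = ?shift (hash_diffs T)" for T
    using assms(1) length_keys
    by (simp add: hash_diffs_def ab simple_tab_xor_entry xor_xor_shift)
  have maps: "?g ` fibre s' t' \<subseteq> fibre (fst (?shift (s', t'))) (snd (?shift (s', t')))" for s' t'
    by (auto simp: fibre_def closed shift)
  have "bij_betw ?g (fibre s t) (fibre (s XOR (if a then v else 0)) (t XOR (if b then v else 0)))"
    using maps [of s t] maps [of "s XOR (if a then v else 0)" "t XOR (if b then v else 0)"]
    by (intro bij_betw_byWitness [where f' = ?g]) (auto simp: xor_right_self)
  then show ?thesis by (rule bij_betw_same_card)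
qed

lemma independent_diff_patterns:
  obtains p q where "p < m" "q < m" "diff_pattern p \<noteq> diff_pattern q"
    "diff_pattern p \<noteq> (False, False)" "diff_pattern q \<noteq> (False, False)"
proof -
  have differ: "\<exists>i<m. x ! i \<noteq> x1 ! i" if "x \<in> {x2, x3, x4}" for x
  proof -
    have "x \<noteq> x1" "length x = length x1"
      using that distinct_keys length_keys by auto
    then show ?thesis
      using length_keys(1) by (auto simp: list_eq_iff_nth_eq)
  qed
  obtain p2 where p2: "p2 < m" "x2 ! p2 \<noteq> x1 ! p2" using differ by blast
  obtain p3 where p3: "p3 < m" "x3 ! p3 \<noteq> x1 ! p3" using differ by blast
  obtain p4 where p4: "p4 < m" "x4 ! p4 \<noteq> x1 ! p4" using differ by blast
  have p4_pattern: "diff_pattern p4 \<in> {(True, False), (False, True)}"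
    using paired_exactly_one [OF paired_chars [OF p4(1)] p4(2)] by (auto simp: diff_pattern_def)
  show ?thesis
  proof (cases "diff_pattern p2 = diff_pattern p3")
    case True
    then have "diff_pattern p2 = (True, True)"
      using p2 p3 by (simp add: diff_pattern_def)
    with p4_pattern show ?thesis
      using that [OF p2(1) p4(1)] by auto
  next
    case False
    then show ?thesis
      using that [OF p2(1) p3(1)] p2 p3 by (simp add: diff_pattern_def)
  qed
qed

lemma card_fibre_eq_card_fibre_0:
  assumes "s < 2 ^ k" and "t < 2 ^ k"
  shows "card (fibre s t) = card (fibre 0 0)"
proof -
  obtain p q where pq: "p < m" "q < m" "diff_pattern p \<noteq> diff_pattern q"
    "diff_pattern p \<noteq> (False, False)" "diff_pattern q \<noteq> (False, False)"
    by (rule independent_diff_patterns)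
  obtain a b a' b' where ab: "diff_pattern p = (a, b)" "diff_pattern q = (a', b')"
    using prod.exhaust by metis
  have "\<exists>v \<in> {s, t, s XOR t}. \<exists>w \<in> {s, t, s XOR t}.
      s = (if a then v else 0) XOR (if a' then w else 0) \<and>
      t = (if b then v else 0) XOR (if b' then w else 0)"
    using pq(3-5) unfolding ab by (rule xor_span_two_patterns)
  then obtain v w where vw: "v \<in> {s, t, s XOR t}" "w \<in> {s, t, s XOR t}"
    "s = (if a then v else 0) XOR (if a' then w else 0)"
    "t = (if b then v else 0) XOR (if b' then w else 0)"
    by blast
  have "v < 2 ^ k" "w < 2 ^ k"
    using vw(1,2) assms xor_less_two_power by blast+
  have "card (fibre 0 0) = card (fibre (if a then v else 0) (if b then v else 0))"
    using card_fibre_shift [OF pq(1) \<open>v < 2 ^ k\<close> ab(1), of 0 0] by (simp only: xor.left_neutral)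
  also have "\<dots> = card (fibre s t)"
    unfolding vw(3,4) by (rule card_fibre_shift [OF pq(2) \<open>w < 2 ^ k\<close> ab(2)])
  finally show ?thesis by (rule sym)
qed

lemma card_paired_simple_tab:
  "card {T \<in> round_tables k m.
      paired (simple_tab T x1) (simple_tab T x2) (simple_tab T x3) (simple_tab T x4)} * (2 ^ k)\<^sup>2
    = (3 * 2 ^ k - 2) * card (round_tables k m)"
proof -
  let ?n = "2 ^ k :: nat" and ?N = "card (fibre 0 0)"
  let ?good = "{(s, t). s < ?n \<and> t < ?n \<and> (s = 0 \<or> t = 0 \<or> s = t)}"
  have uniform: "card {T \<in> round_tables k m. hash_diffs T = z} = ?N"
    if z: "z \<in> {..<?n} \<times> {..<?n}" for z
  proof -
    obtain s t where "z = (s, t)" "s < ?n" "t < ?n"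
      using z by blast
    then show ?thesis
      using card_fibre_eq_card_fibre_0 [of s t] by (simp add: fibre_def)
  qed
  have "card {T \<in> round_tables k m. hash_diffs T \<in> {..<?n} \<times> {..<?n}} = card ({..<?n} \<times> {..<?n}) * ?N"
    by (rule card_preimage_eq_mult [OF finite_round_tables _ uniform]) auto
  moreover have "{T \<in> round_tables k m. hash_diffs T \<in> {..<?n} \<times> {..<?n}} = round_tables k m"
    using hash_diffs_less by blast
  ultimately have all: "card (round_tables k m) = ?n * ?n * ?N"
    by simp
  have "card {T \<in> round_tables k m. hash_diffs T \<in> ?good} = card ?good * ?N"
    by (rule card_preimage_eq_mult [OF finite_round_tables _ uniform])
      (auto intro: finite_subset [of _ "{..<?n} \<times> {..<?n}"])
  moreover have "{T \<in> round_tables k m.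
      paired (simple_tab T x1) (simple_tab T x2) (simple_tab T x3) (simple_tab T x4)}
      = {T \<in> round_tables k m. hash_diffs T \<in> ?good}"
    by (auto simp: paired_simple_tab_iff dest: hash_diffs_less)
  ultimately show ?thesis
    using all card_axes_or_diagonal [of ?n] by (simp add: power2_eq_square)
qed

end

lemma card_round_tables_even_fibres:
  assumes "Y \<subseteq> keys k m" and "zero_set m Y" and "card Y = 4"
  shows "card {T \<in> round_tables k m. even_fibres (simple_tab T) Y} * (2 ^ k)\<^sup>2
    = (3 * 2 ^ k - 2) * card (round_tables k m)"
proof -
  obtain x1 x2 x3 x4 where Y: "Y = {x1, x2, x3, x4}" and distinct: "distinct [x1, x2, x3, x4]"
    using assms(3) by (rule card_eq_4_obtain)
  interpret four_paired_keys k m x1 x2 x3 x4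
  proof
    show "{x1, x2, x3, x4} \<subseteq> keys k m" using assms(1) Y by simp
    show "distinct [x1, x2, x3, x4]" by (fact distinct)
    show "paired (x1 ! i) (x2 ! i) (x3 ! i) (x4 ! i)" if "i < m" for i
      using assms(2) that by (simp add: Y zero_set_iff_even_fibres even_fibres_four_iff [OF distinct])
  qed
  show ?thesis
    using card_paired_simple_tab by (simp add: Y even_fibres_four_iff [OF distinct])
qed

section \<open>Independent rounds\<close>

lemma zero_in_tables: "(\<lambda>_ _ _. 0) \<in> tables k c d"
  by (simp add: tables_def alphabet_def)

lemma bij_betw_tables_Suc:
  "bij_betw (\<lambda>(T, R). T(d := R)) (tables k c d \<times> round_tables k (c + d)) (tables k c (Suc d))"
  by (rule bij_betw_byWitness [where f' = "\<lambda>T. (T(d := \<lambda>_ _. 0), T d)"])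
    (auto simp: tables_def round_tables_def alphabet_def fun_eq_iff less_Suc_eq)

lemma finite_tables: "finite (tables k c d)"
proof (induction d)
  case 0
  have "tables k c 0 = {\<lambda>_ _ _. 0}"
    by (auto simp: tables_def alphabet_def fun_eq_iff)
  then show ?case by simp
next
  case (Suc d)
  then show ?case
    using bij_betw_finite [OF bij_betw_tables_Suc] finite_round_tables by blast
qed

lemma card_tables_Suc:
  "card (tables k c (Suc d)) = card (tables k c d) * card (round_tables k (c + d))"
  using bij_betw_same_card [OF bij_betw_tables_Suc] by (simp add: card_cartesian_product)

lemma length_derived_aux [simp]: "length (derived_aux Tab j x) = length x + j"
  by (induction j) (simp_all add: Let_def)

lemma take_derived_aux: "take (length x) (derived_aux Tab j x) = x"
  by (induction j) (simp_all add: Let_def)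

lemma inj_on_derived_aux: "inj_on (derived_aux Tab j) (keys k c)"
proof (rule inj_onI)
  fix x y
  assume "x \<in> keys k c" "y \<in> keys k c" "derived_aux Tab j x = derived_aux Tab j y"
  then show "x = y"
    using take_derived_aux [of x Tab j] take_derived_aux [of y Tab j] by (simp add: keys_def)
qed

lemma derived_aux_in_keys:
  assumes "Tab \<in> tables k c d" and "x \<in> keys k c"
  shows "derived_aux Tab j x \<in> keys k (c + j)"
proof (induction j)
  case (Suc j)
  have "simple_tab (Tab j) (derived_aux Tab j x) < 2 ^ k"
    using assms(1) by (intro simple_tab_less_two_power) (auto simp: tables_def alphabet_def)
  then show ?case
    using Suc by (simp add: keys_def alphabet_def Let_def)
qed (use assms(2) in simp)

lemma derived_aux_fun_upd: "j \<le> d \<Longrightarrow> derived_aux (Tab(d := R)) j x = derived_aux Tab j x"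
  by (induction j) (simp_all add: Let_def)

definition survivors :: "nat \<Rightarrow> nat \<Rightarrow> nat \<Rightarrow> nat list set \<Rightarrow> (nat \<Rightarrow> nat \<Rightarrow> nat \<Rightarrow> nat) set" where
  "survivors k c d Y = {Tab \<in> tables k c d. zero_set (c + d) (derived_aux Tab d ` Y)}"

lemma survivors_Suc:
  assumes "Y \<subseteq> keys k c"
  shows "survivors k c (Suc d) Y = (\<lambda>(T, R). T(d := R)) `
    (SIGMA T : survivors k c d Y. {R \<in> round_tables k (c + d). even_fibres (simple_tab R) (derived_aux T d ` Y)})"
proof -
  have step: "zero_set (Suc (c + d)) (derived_aux (T(d := R)) (Suc d) ` Y) \<longleftrightarrow>
      zero_set (c + d) (derived_aux T d ` Y) \<and> even_fibres (simple_tab R) (derived_aux T d ` Y)"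
    if "T \<in> tables k c d" for T R
  proof -
    have "derived_aux (T(d := R)) (Suc d) ` Y = (\<lambda>y. y @ [simple_tab R y]) ` (derived_aux T d ` Y)"
      by (auto simp: derived_aux_fun_upd Let_def image_image)
    moreover have "length y = c + d" if "y \<in> derived_aux T d ` Y" for y
      using that assms by (auto simp: keys_def)
    ultimately show ?thesis
      by (simp add: zero_set_Suc_append)
  qed
  have "tables k c (Suc d) = (\<lambda>(T, R). T(d := R)) ` (tables k c d \<times> round_tables k (c + d))"
    using bij_betw_tables_Suc by (rule bij_betw_imp_surj_on [symmetric])
  then have "survivors k c (Suc d) Y = (\<lambda>(T, R). T(d := R)) `
      {(T, R) \<in> tables k c d \<times> round_tables k (c + d).
        zero_set (c + Suc d) (derived_aux (T(d := R)) (Suc d) ` Y)}"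
    by (auto simp: survivors_def)
  also have "{(T, R) \<in> tables k c d \<times> round_tables k (c + d).
        zero_set (c + Suc d) (derived_aux (T(d := R)) (Suc d) ` Y)}
      = (SIGMA T : survivors k c d Y.
          {R \<in> round_tables k (c + d). even_fibres (simple_tab R) (derived_aux T d ` Y)})"
    by (auto simp: survivors_def step simp del: derived_aux.simps)
  finally show ?thesis .
qed

lemma card_survivors_Suc:
  assumes "Y \<subseteq> keys k c" and "card Y = 4"
  shows "card (survivors k c (Suc d) Y) * (2 ^ k)\<^sup>2
    = (3 * 2 ^ k - 2) * card (round_tables k (c + d)) * card (survivors k c d Y)"
proof -
  let ?E = "\<lambda>T. {R \<in> round_tables k (c + d). even_fibres (simple_tab R) (derived_aux T d ` Y)}"
  have "inj_on (\<lambda>(T, R). T(d := R)) (SIGMA T : survivors k c d Y. ?E T)"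
    by (rule inj_on_subset [OF bij_betw_imp_inj_on [OF bij_betw_tables_Suc]])
      (auto simp: survivors_def)
  then have "card (survivors k c (Suc d) Y) = card (SIGMA T : survivors k c d Y. ?E T)"
    unfolding survivors_Suc [OF assms(1)] by (rule card_image)
  also have "\<dots> = (\<Sum>T \<in> survivors k c d Y. card (?E T))"
    using finite_tables finite_round_tables by (simp add: survivors_def)
  finally have "card (survivors k c (Suc d) Y) * (2 ^ k)\<^sup>2
      = (\<Sum>T \<in> survivors k c d Y. card (?E T) * (2 ^ k)\<^sup>2)"
    by (simp add: sum_distrib_right)
  also have "\<dots> = (\<Sum>T \<in> survivors k c d Y. (3 * 2 ^ k - 2) * card (round_tables k (c + d)))"
  proof (rule sum.cong)
    fix T assume T: "T \<in> survivors k c d Y"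
    then have "derived_aux T d ` Y \<subseteq> keys k (c + d)"
      using assms(1) derived_aux_in_keys by (auto simp: survivors_def)
    moreover have "card (derived_aux T d ` Y) = 4"
      using assms inj_on_subset [OF inj_on_derived_aux] by (simp add: card_image)
    ultimately show "card (?E T) * (2 ^ k)\<^sup>2 = (3 * 2 ^ k - 2) * card (round_tables k (c + d))"
      using T by (intro card_round_tables_even_fibres) (auto simp: survivors_def)
  qed simp
  finally show ?thesis by simp
qed

lemma card_survivors:
  assumes "Y \<subseteq> keys k c" and "zero_set c Y" and "card Y = 4"
  shows "card (survivors k c d Y) * ((2 ^ k)\<^sup>2) ^ d = (3 * 2 ^ k - 2) ^ d * card (tables k c d)"
proof (induction d)
  case 0
  have "survivors k c 0 Y = tables k c 0"
    using assms(2) by (simp add: survivors_def)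
  then show ?case by simp
next
  case (Suc d)
  have "card (survivors k c (Suc d) Y) * ((2 ^ k)\<^sup>2) ^ Suc d
      = (3 * 2 ^ k - 2) * card (round_tables k (c + d)) * (card (survivors k c d Y) * ((2 ^ k)\<^sup>2) ^ d)"
    using card_survivors_Suc [OF assms(1,3), of d] by (simp add: ac_simps)
  also have "\<dots> = (3 * 2 ^ k - 2) ^ Suc d * card (tables k c (Suc d))"
    by (simp add: Suc.IH card_tables_Suc)
  finally show ?case .
qed

lemma survival_ratio:
  assumes "Y \<subseteq> keys k c" and "zero_set c Y" and "card Y = 4"
  shows "card (survivors k c d Y) / card (tables k c d) = ((3 - 2 / 2 ^ k) / 2 ^ k :: real) ^ d"
proof -
  let ?n = "2 ^ k :: real"
  have "2 \<le> 3 * (2::nat) ^ k"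
    using one_le_power [of "2::nat" k] by linarith
  then have count: "real (card (survivors k c d Y)) * (?n\<^sup>2) ^ d = (3 * ?n - 2) ^ d * card (tables k c d)"
    using arg_cong [OF card_survivors [OF assms, of d], of real] by (simp add: of_nat_diff)
  have "real (card (tables k c d)) \<noteq> 0"
    using zero_in_tables finite_tables by fastforce
  then have "card (survivors k c d Y) / card (tables k c d) = (3 * ?n - 2) ^ d / (?n\<^sup>2) ^ d"
    by (simp add: frac_eq_eq count)
  also have "\<dots> = ((3 * ?n - 2) / ?n\<^sup>2) ^ d"
    by (simp add: power_divide)
  also have "(3 * ?n - 2) / ?n\<^sup>2 = (3 - 2 / ?n) / ?n"
    by (simp add: field_simps power2_eq_square)
  finally show ?thesis .
qed

theorem corollary8p2:
  fixes k c d :: nat and Y :: "nat list set"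
  assumes "c \<ge> 2" and "d \<ge> 1"
    and "Y \<subseteq> keys k c" and "zero_set c Y" and "card Y = 4"
  shows "measure_pmf.prob (pmf_of_set (tables k c d))
           {Tab. zero_set (c + d) (derived_key Tab d ` Y)}
         = ((3 - 2 / real (card (alphabet k))) / real (card (alphabet k))) ^ d"
proof -
  have "tables k c d \<noteq> {}"
    using zero_in_tables by blast
  then have "measure_pmf.prob (pmf_of_set (tables k c d)) {Tab. zero_set (c + d) (derived_key Tab d ` Y)}
      = card (survivors k c d Y) / card (tables k c d)"
    by (simp add: measure_pmf_of_set finite_tables survivors_def derived_key_def Int_def conj_commute)
  also have "\<dots> = ((3 - 2 / 2 ^ k) / 2 ^ k) ^ d"
    using assms(3-5) by (rule survival_ratio)
  finally show ?thesis
    by (simp add: alphabet_def)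
qed

end
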